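(* For every $n\in\mathbb{N}$ and every formula $\varphi$ of $\mathbf{CPN}_n$: if $\models_{(n)}\varphi$ then $\vdash_{(n)}\varphi$.
   Context: Fix $n\in\mathbb{N}$, $n\ge 1$, and write $[n]=\{1,\dots,n\}$. Chains: a chain over $[n]$ is a finite sequence of distinct elements of $[n]$; chains with the same length and the same symbols are identified, so a chain is effectively a subset of $[n]$. $c_k$ denotes a chain with $k$ symbols, $\epsilon$ the empty chain, and $(n)$ the chain consisting of all symbols of $[n]$. For chains $c,d$: the concatenation $c\cdot d$ is the chain of symbols occurring in $c$ or in $d$; the coconcatenation $c\otimes d$ is the chain of symbols occurring in exactly one of $c,d$; $d$ is a subchain of $c$ if every symbol of $d$ is a symbol of $c$. The complementary chain $c'_{n-k}$ of $c_k$ is the chain of the symbols of $[n]$ not occurring in $c_k$. Language of $\mathbf{CPN}_n$: a countable set $P_n$ of propositional letters; constants $\perp_c$ for each chain $c$ over $[n]$ with $1\le |c|\le n-1$, and constants $\perp_{(n)}$ (contradiction) and $\top_{(n)}$ (truth); a unary connective $\neg_c$ for each nonempty chain $c$ over $[n]$ ($\neg_{(n)}$ is the strong negation; the $\neg_c$ with $|c|\le n-1$ are weak negations); a binary connective $\to_{(n)}$. Formulas: propositional letters and constants are formulas; if $\varphi,\psi$ are formulas then so are $\neg_c\varphi$ and $(\varphi\to_{(n)}\psi)$. Conventions: $\neg_\epsilon\varphi:=\varphi$, $\perp_\epsilon:=\top_{(n)}$, and $\perp_c$ for $c=(n)$ means $\perp_{(n)}$. Abbreviations: $\varphi\wedge_{(n)}\psi:=\neg_{(n)}(\varphi\to_{(n)}\neg_{(n)}\psi)$,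 $\varphi\vee_{(n)}\psi:=\neg_{(n)}\varphi\to_{(n)}\psi$, $\varphi\leftrightarrow_{(n)}\psi:=(\varphi\to_{(n)}\psi)\wedge_{(n)}(\psi\to_{(n)}\varphi)$. Axioms of $\mathbf{CPN}_n$, for all formulas $\varphi,\psi,\chi$ and all nonempty chains $c_k,c_r$ over $[n]$: (A1) $\varphi\to_{(n)}(\psi\to_{(n)}\varphi)$; (A2) $(\varphi\to_{(n)}(\psi\to_{(n)}\chi))\to_{(n)}((\varphi\to_{(n)}\psi)\to_{(n)}(\varphi\to_{(n)}\chi))$; (A3) $(\neg_{(n)}\psi\to_{(n)}\neg_{(n)}\varphi)\to_{(n)}((\neg_{(n)}\psi\to_{(n)}\varphi)\to_{(n)}\psi)$; (A4) $\varphi\to_{(n)}(\perp_{c_k}\to_{(n)}\neg_{c_k}\varphi)$; (A5) $\neg_{c_k}\neg_{c_r}\varphi\leftrightarrow_{(n)}\neg_{c_k\otimes c_r}\varphi$; (A6) $\neg_{c_k}\perp_{c_r}\leftrightarrow_{(n)}\perp_{c_k\otimes c_r}$; (A7) $\perp_{c_k}\to_{(n)}\perp_{c_r}$, whenever $c_r$ is a subchain of $c_k$. The only rule of inference is modus ponens (from $\varphi$ and $\varphi\to_{(n)}\psi$ infer $\psi$). For a set $\Sigma$ of formulas, $\Sigma\vdash_{(n)}\varphi$ means there is a finite sequence of formulas ending with $\varphi$, each of which is an axiom, a member of $\Sigma$, or obtained from two earlier members by modus ponens; $\vdash_{(n)}\varphi$ means $\emptyset\vdash_{(n)}\varphi$.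 Semantics: for each $i\in[n]$ there is a world $\mathcal M_i=\{T_i,F_i\}$ (pairwise disjoint sets). A valuation $\mathcal V$ assigns to each propositional letter $p$ and each $i\in[n]$ a value $v_i(p)\in\mathcal M_i$ (independently for different $i$). It extends to all formulas, for each $i$, by: $\bar v_i(p)=v_i(p)$ for letters; $\bar v_i(\perp_c)=F_i$ if $i$ is a symbol of $c$ and $T_i$ otherwise (so $\bar v_i(\perp_{(n)})=F_i$ and $\bar v_i(\top_{(n)})=T_i$); $\bar v_i(\neg_c\varphi)=\bar v_i(\varphi)$ if $i$ is not a symbol of $c$, and the opposite value ($T_i\leftrightarrow F_i$) if $i$ is a symbol of $c$; $\bar v_i(\varphi\to_{(n)}\psi)=F_i$ iff $\bar v_i(\varphi)=T_i$ and $\bar v_i(\psi)=F_i$, otherwise $T_i$ (hence $\wedge_{(n)},\vee_{(n)}$ behave classically in each world). Write $\bar{\mathcal V}(\varphi)=(\bar v_1(\varphi),\dots,\bar v_n(\varphi))$. A formula $\varphi$ is a tautology, written $\models_{(n)}\varphi$, iff $\bar{\mathcal V}(\varphi)=(T_1,\dots,T_n)$ for every valuation $\mathcal V$. *)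

theory Defs
  imports Main
begin

text \<open>Chains over [n] are identified with subsets of {1..n} (as in the paper,
chains with the same symbols are identified). Propositional letters are indexed by nat.\<close>

datatype fm =
    Var nat
  | Bot "nat set"        (* constant \<bottom>_c; Bot {} = \<top>_(n), Bot {1..n} = \<bottom>_(n) *)
  | Neg "nat set" fm
  | Imp fm fm

fun wff :: "nat \<Rightarrow> fm \<Rightarrow> bool" where
  "wff n (Var p) = True"
| "wff n (Bot c) = (c \<subseteq> {1..n})"
| "wff n (Neg c \<phi>) = (c \<noteq> {} \<and> c \<subseteq> {1..n} \<and> wff n \<phi>)"
| "wff n (Imp \<phi> \<psi>) = (wff n \<phi> \<and> wff n \<psi>)"

definition cocat :: "nat set \<Rightarrow> nat set \<Rightarrow> nat set" where
  "cocat c d = (c - d) \<union> (d - c)"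

definition neg :: "nat set \<Rightarrow> fm \<Rightarrow> fm" where
  "neg c \<phi> = (if c = {} then \<phi> else Neg c \<phi>)"

definition sneg :: "nat \<Rightarrow> fm \<Rightarrow> fm" where
  "sneg n \<phi> = Neg {1..n} \<phi>"

definition And :: "nat \<Rightarrow> fm \<Rightarrow> fm \<Rightarrow> fm" where
  "And n \<phi> \<psi> = sneg n (Imp \<phi> (sneg n \<psi>))"

definition Iff :: "nat \<Rightarrow> fm \<Rightarrow> fm \<Rightarrow> fm" where
  "Iff n \<phi> \<psi> = And n (Imp \<phi> \<psi>) (Imp \<psi> \<phi>)"

inductive prov :: "nat \<Rightarrow> fm \<Rightarrow> bool" where
  A1: "\<lbrakk>wff n \<phi>; wff n \<psi>\<rbrakk> \<Longrightarrow> prov n (Imp \<phi> (Imp \<psi> \<phi>))"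
| A2: "\<lbrakk>wff n \<phi>; wff n \<psi>; wff n \<chi>\<rbrakk> \<Longrightarrow>
        prov n (Imp (Imp \<phi> (Imp \<psi> \<chi>)) (Imp (Imp \<phi> \<psi>) (Imp \<phi> \<chi>)))"
| A3: "\<lbrakk>wff n \<phi>; wff n \<psi>\<rbrakk> \<Longrightarrow>
        prov n (Imp (Imp (sneg n \<psi>) (sneg n \<phi>)) (Imp (Imp (sneg n \<psi>) \<phi>) \<psi>))"
| A4: "\<lbrakk>wff n \<phi>; c \<noteq> {}; c \<subseteq> {1..n}\<rbrakk> \<Longrightarrow>
        prov n (Imp \<phi> (Imp (Bot c) (Neg c \<phi>)))"
| A5: "\<lbrakk>wff n \<phi>; c \<noteq> {}; c \<subseteq> {1..n}; d \<noteq> {}; d \<subseteq> {1..n}\<rbrakk> \<Longrightarrow>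
        prov n (Iff n (Neg c (Neg d \<phi>)) (neg (cocat c d) \<phi>))"
| A6: "\<lbrakk>c \<noteq> {}; c \<subseteq> {1..n}; d \<noteq> {}; d \<subseteq> {1..n}\<rbrakk> \<Longrightarrow>
        prov n (Iff n (Neg c (Bot d)) (Bot (cocat c d)))"
| A7: "\<lbrakk>c \<noteq> {}; c \<subseteq> {1..n}; d \<noteq> {}; d \<subseteq> c\<rbrakk> \<Longrightarrow>
        prov n (Imp (Bot c) (Bot d))"
| MP: "\<lbrakk>prov n \<phi>; prov n (Imp \<phi> \<psi>)\<rbrakk> \<Longrightarrow> prov n \<psi>"

text \<open>Semantics: v p i = True means v_i(p) = T_i.\<close>
fun eval :: "(nat \<Rightarrow> nat \<Rightarrow> bool) \<Rightarrow> nat \<Rightarrow> fm \<Rightarrow> bool" where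
  "eval v i (Var p) = v p i"
| "eval v i (Bot c) = (i \<notin> c)"
| "eval v i (Neg c \<phi>) = (if i \<in> c then \<not> eval v i \<phi> else eval v i \<phi>)"
| "eval v i (Imp \<phi> \<psi>) = (eval v i \<phi> \<longrightarrow> eval v i \<psi>)"

definition taut :: "nat \<Rightarrow> fm \<Rightarrow> bool" where
  "taut n \<phi> = (\<forall>v. \<forall>i\<in>{1..n}. eval v i \<phi>)"

end

theory Submission
  imports Defs
begin

(*
  Each world is classical. Inside world j the hypothesis \<bottom>_{[n]-{j}} yields \<bottom>_d for every
  nonempty d with j \<notin> d (A7), and this makes \<not>_d provably invisible: A4 gives \<psi> \<turnstile> \<not>_d \<psi>,
  and A4 together with A5 (\<not>_d \<not>_d \<psi> \<leftrightarrow> \<psi>) gives the converse. Hence Kalmar's argument works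
  world by world: a formula true in world j under every valuation is derivable from \<bottom>_{[n]-{j}}.
  For a tautology \<phi>, the hypothesis \<not>_(n) \<phi> therefore yields \<not>_(n) \<bottom>_{[n]-{j}}, which is
  \<bottom>_{j} by A6, for every j; A4 and A6 glue these into \<bottom>_(n), contradicting \<turnstile> \<not>_(n) \<bottom>_(n).
*)

(* Only well-formed hypotheses may be used, so every derivable formula is well-formed. *)
inductive der :: "nat \<Rightarrow> fm set \<Rightarrow> fm \<Rightarrow> bool" for n :: nat and G :: "fm set" where
  provable: "prov n \<phi> \<Longrightarrow> der n G \<phi>"
| hyp: "\<phi> \<in> G \<Longrightarrow> wff n \<phi> \<Longrightarrow> der n G \<phi>"
| mp: "der n G \<phi> \<Longrightarrow> der n G (Imp \<phi> \<psi>) \<Longrightarrow> der n G \<psi>"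

lemma der_mono: "der n G \<phi> \<Longrightarrow> G \<subseteq> H \<Longrightarrow> der n H \<phi>"
  by (induction rule: der.induct) (auto intro: der.intros)

lemma prov_if_der_empty: "der n {} \<phi> \<Longrightarrow> prov n \<phi>"
  by (induction rule: der.induct) (auto intro: prov.MP)

lemma der_assumption: "wff n \<phi> \<Longrightarrow> der n (insert \<phi> G) \<phi>"
  by (simp add: der.hyp)

lemma der_mp_prov: "prov n (Imp \<phi> \<psi>) \<Longrightarrow> der n G \<phi> \<Longrightarrow> der n G \<psi>"
  by (rule der.mp[OF _ der.provable])

lemma prov_wff: "prov n \<phi> \<Longrightarrow> n \<ge> 1 \<Longrightarrow> wff n \<phi>"
  by (induction rule: prov.induct) (auto simp: Iff_def And_def sneg_def neg_def cocat_def)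

lemma cocat_self [simp]: "cocat c c = {}"
  by (auto simp: cocat_def)

lemma cocat_subset: "c \<subseteq> d \<Longrightarrow> cocat d c = d - c"
  by (auto simp: cocat_def)

definition signed :: "nat \<Rightarrow> bool \<Rightarrow> fm \<Rightarrow> fm" where
  "signed n b \<phi> = (if b then \<phi> else sneg n \<phi>)"

fun vars :: "fm \<Rightarrow> nat set" where
  "vars (Var p) = {p}"
| "vars (Bot c) = {}"
| "vars (Neg c \<phi>) = vars \<phi>"
| "vars (Imp \<phi> \<psi>) = vars \<phi> \<union> vars \<psi>"

lemma finite_vars: "finite (vars \<phi>)"
  by (induction \<phi>) auto

definition literals :: "nat \<Rightarrow> (nat \<Rightarrow> bool) \<Rightarrow> nat set \<Rightarrow> fm set" where
  "literals n \<rho> S = (\<lambda>p. signed n (\<rho> p) (Var p)) ` S"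

context
  fixes n :: nat
  assumes n_ge_1: "n \<ge> 1"
begin

lemma wff_sneg [simp]: "wff n (sneg n \<phi>) = wff n \<phi>"
  using n_ge_1 by (auto simp: sneg_def)

lemma der_wff: "der n G \<phi> \<Longrightarrow> wff n \<phi>"
  by (induction rule: der.induct) (use n_ge_1 prov_wff in auto)

lemma wff_signed [simp]: "wff n (signed n b \<phi>) = wff n \<phi>"
  by (simp add: signed_def)

lemma prov_imp_refl:
  assumes "wff n A"
  shows "prov n (Imp A A)"
proof -
  have "prov n (Imp (Imp A (Imp (Imp A A) A)) (Imp (Imp A (Imp A A)) (Imp A A)))"
    using assms by (intro prov.A2) auto
  moreover have "prov n (Imp A (Imp (Imp A A) A))" using assms by (intro prov.A1) auto
  moreover have "prov n (Imp A (Imp A A))" using assms by (intro prov.A1) auto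
  ultimately show ?thesis by (meson prov.MP)
qed

lemma der_deduction:
  assumes "der n (insert A G) B" and wA: "wff n A"
  shows "der n G (Imp A B)"
  using assms(1)
proof (induction rule: der.induct)
  case (provable \<phi>)
  moreover have "prov n (Imp \<phi> (Imp A \<phi>))" using der_wff[OF der.provable[OF provable]] wA by (intro prov.A1)
  ultimately show ?case by (meson der.provable der_mp_prov)
next
  case (hyp \<phi>)
  show ?case
  proof (cases "\<phi> = A")
    case True
    then show ?thesis using prov_imp_refl wA der.provable by blast
  next
    case False
    then have "der n G \<phi>" using hyp by (auto intro: der.hyp)
    moreover have "prov n (Imp \<phi> (Imp A \<phi>))" using hyp wA by (intro prov.A1)
    ultimately show ?thesis by (rule der_mp_prov[rotated])
  qed
next
  case (mp \<phi> \<psi>)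
  have "wff n \<phi>" "wff n \<psi>" using der_wff[OF mp.hyps(2)] by auto
  then have "prov n (Imp (Imp A (Imp \<phi> \<psi>)) (Imp (Imp A \<phi>) (Imp A \<psi>)))"
    using wA by (intro prov.A2)
  then show ?case using mp.IH by (meson der.mp der_mp_prov)
qed

lemma der_exfalso:
  assumes "der n G (sneg n A)" and "der n G A" and "wff n B"
  shows "der n G B"
proof -
  have wA: "wff n A" using der_wff[OF assms(2)] .
  have "prov n (Imp (sneg n A) (Imp (sneg n B) (sneg n A)))"
    using wA assms(3) by (intro prov.A1) auto
  then have 1: "der n G (Imp (sneg n B) (sneg n A))" using assms(1) by (rule der_mp_prov)
  have "prov n (Imp A (Imp (sneg n B) A))" using wA assms(3) by (intro prov.A1) auto
  then have 2: "der n G (Imp (sneg n B) A)" using assms(2) by (rule der_mp_prov)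
  have "prov n (Imp (Imp (sneg n B) (sneg n A)) (Imp (Imp (sneg n B) A) B))"
    using wA assms(3) by (intro prov.A3)
  then show ?thesis using 1 2 by (meson der.mp der_mp_prov)
qed

lemma der_sneg_sneg_elim:
  assumes "der n G (sneg n (sneg n A))"
  shows "der n G A"
proof -
  have wA: "wff n A" using der_wff[OF assms] by simp
  have "prov n (Imp (sneg n (sneg n A)) (Imp (sneg n A) (sneg n (sneg n A))))"
    using wA by (intro prov.A1) auto
  then have 1: "der n G (Imp (sneg n A) (sneg n (sneg n A)))" using assms by (rule der_mp_prov)
  have 2: "der n G (Imp (sneg n A) (sneg n A))" using prov_imp_refl wA der.provable by simp
  have "prov n (Imp (Imp (sneg n A) (sneg n (sneg n A))) (Imp (Imp (sneg n A) (sneg n A)) A))"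
    using wA by (intro prov.A3) auto
  then show ?thesis using 1 2 by (meson der.mp der_mp_prov)
qed

lemma der_by_contradiction:
  assumes "der n (insert (sneg n B) G) C" and "der n (insert (sneg n B) G) (sneg n C)"
    and wB: "wff n B"
  shows "der n G B"
proof -
  have wC: "wff n C" using der_wff[OF assms(1)] .
  have 1: "der n G (Imp (sneg n B) C)" using der_deduction assms(1) wB by simp
  have 2: "der n G (Imp (sneg n B) (sneg n C))" using der_deduction assms(2) wB by simp
  have "prov n (Imp (Imp (sneg n B) (sneg n C)) (Imp (Imp (sneg n B) C) B))"
    using wB wC by (intro prov.A3)
  then show ?thesis using 1 2 by (meson der.mp der_mp_prov)
qed

lemma der_modus_tollens:
  assumes "der n G (Imp A B)" and "der n G (sneg n B)"
  shows "der n G (sneg n A)"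
proof (rule der_by_contradiction)
  let ?H = "insert (sneg n (sneg n A)) G"
  have wAB: "wff n A" "wff n B" using der_wff[OF assms(1)] by auto
  then have "der n ?H A" by (simp add: der_sneg_sneg_elim der_assumption)
  then show "der n ?H B" using der_mono[OF assms(1)] by (meson der.mp subset_insertI)
  show "der n ?H (sneg n B)" using der_mono[OF assms(2)] by blast
qed (use der_wff[OF assms(1)] in simp)

lemma der_cases:
  assumes "der n (insert A G) B" and "der n (insert (sneg n A) G) B" and wA: "wff n A"
  shows "der n G B"
proof (rule der_by_contradiction)
  let ?H = "insert (sneg n B) G"
  have wB: "wff n B" using der_wff[OF assms(1)] .
  have "der n ?H (Imp A B)" using der_mono[OF der_deduction[OF assms(1) wA]] by blast
  then have "der n ?H (sneg n A)" using wB by (simp add: der_modus_tollens der_assumption)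
  moreover have "der n ?H (Imp (sneg n A) B)"
    using der_mono[OF der_deduction[OF assms(2)]] wA by auto
  ultimately show "der n ?H B" by (rule der.mp)
  show "der n ?H (sneg n B)" using wB by (simp add: der_assumption)
qed (use der_wff[OF assms(1)] in simp)

lemma der_sneg_Imp_intro:
  assumes "der n G A" and "der n G (sneg n B)"
  shows "der n G (sneg n (Imp A B))"
proof (rule der_by_contradiction)
  let ?H = "insert (sneg n (sneg n (Imp A B))) G"
  have "wff n (Imp A B)"
    using der_wff[OF assms(1)] der_wff[OF assms(2)] by simp
  then have "der n ?H (Imp A B)" by (simp add: der_sneg_sneg_elim der_assumption)
  then show "der n ?H B" using der_mono[OF assms(1)] by (meson der.mp subset_insertI)
  show "der n ?H (sneg n B)" using der_mono[OF assms(2)] by blast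
qed (use der_wff[OF assms(1)] der_wff[OF assms(2)] in simp)

lemma der_sneg_ImpD1:
  assumes "der n G (sneg n (Imp A B))"
  shows "der n G A"
proof (rule der_by_contradiction)
  let ?H = "insert (sneg n A) G"
  have wAB: "wff n A" "wff n B" using der_wff[OF assms] by auto
  have "der n (insert A ?H) A" and "der n (insert A ?H) (sneg n A)"
    using wAB by (auto intro: der.hyp)
  then have "der n (insert A ?H) B" using der_exfalso wAB by blast
  then show "der n ?H (Imp A B)" using der_deduction wAB by blast
  show "der n ?H (sneg n (Imp A B))" using der_mono[OF assms] by blast
qed (use der_wff[OF assms] in simp)

lemma der_sneg_ImpD2:
  assumes "der n G (sneg n (Imp A B))"
  shows "der n G (sneg n B)"
proof (rule der_by_contradiction)
  let ?H = "insert (sneg n (sneg n B)) G"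
  have wAB: "wff n A" "wff n B" using der_wff[OF assms] by auto
  have "der n ?H B" using wAB by (simp add: der_sneg_sneg_elim der_assumption)
  moreover have "prov n (Imp B (Imp A B))" using wAB by (intro prov.A1)
  ultimately show "der n ?H (Imp A B)" by (rule der_mp_prov[rotated])
  show "der n ?H (sneg n (Imp A B))" using der_mono[OF assms] by blast
qed (use der_wff[OF assms] in simp)

lemma der_iff_if_prov_Iff:
  assumes "prov n (Iff n A B)"
  shows "der n G A \<longleftrightarrow> der n G B"
proof -
  have "der n G (sneg n (Imp (Imp A B) (sneg n (Imp B A))))"
    using der.provable[OF assms] by (simp add: Iff_def And_def)
  then have "der n G (Imp A B)" and "der n G (Imp B A)"
    by (rule der_sneg_ImpD1, rule der_sneg_sneg_elim[OF der_sneg_ImpD2])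
  then show ?thesis by (meson der.mp)
qed

lemma der_Neg_Neg_iff:
  assumes "c \<noteq> {}" "c \<subseteq> {1..n}" "d \<noteq> {}" "d \<subseteq> {1..n}" "wff n \<psi>"
  shows "der n G (Neg c (Neg d \<psi>)) \<longleftrightarrow> der n G (neg (cocat c d) \<psi>)"
  using assms by (intro der_iff_if_prov_Iff prov.A5)

lemma der_Neg_Bot_iff:
  assumes "c \<noteq> {}" "c \<subseteq> {1..n}" "d \<noteq> {}" "d \<subseteq> {1..n}"
  shows "der n G (Neg c (Bot d)) \<longleftrightarrow> der n G (Bot (cocat c d))"
  using assms by (intro der_iff_if_prov_Iff prov.A6)

lemma der_not_bot: "der n G (sneg n (Bot {1..n}))"
proof (rule der_cases[of "Bot {1..n}"])
  let ?H = "insert (Bot {1..n}) G"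
  have "prov n (Imp (Bot {1..n}) (Imp (Bot {1..n}) (sneg n (Bot {1..n}))))"
    using n_ge_1 unfolding sneg_def by (intro prov.A4) auto
  moreover have "der n ?H (Bot {1..n})" by (simp add: der_assumption)
  ultimately show "der n ?H (sneg n (Bot {1..n}))" by (meson der.mp der_mp_prov)
  show "der n (insert (sneg n (Bot {1..n})) G) (sneg n (Bot {1..n}))"
    by (intro der_assumption) simp
qed simp

lemma der_top: "der n G (Bot {})"
  using der_Neg_Bot_iff[of "{1..n}" "{1..n}"] der_not_bot n_ge_1 by (simp add: sneg_def)

lemma der_Bot_subset:
  assumes "der n G (Bot c)" and "d \<subseteq> c"
  shows "der n G (Bot d)"
proof (cases "d = {}")
  case True
  then show ?thesis using der_top by simp
next
  case False
  have "c \<subseteq> {1..n}" using der_wff[OF assms(1)] by simp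
  then have "prov n (Imp (Bot c) (Bot d))" using False assms(2) by (intro prov.A7) auto
  then show ?thesis using assms(1) by (rule der_mp_prov)
qed

lemma der_Bot_Un:
  assumes "der n G (Bot c)" and "der n G (Bot d)"
  shows "der n G (Bot (c \<union> d))"
proof -
  let ?e = "d - c"
  have e: "der n G (Bot ?e)" using der_Bot_subset[OF assms(2) Diff_subset] .
  have c: "c \<subseteq> {1..n}" and d: "d \<subseteq> {1..n}"
    using der_wff[OF assms(1)] der_wff[OF assms(2)] by auto
  show ?thesis
  proof (cases "c = {} \<or> ?e = {}")
    case True
    then have "c \<union> d = d \<or> c \<union> d = c" by blast
    then show ?thesis using assms by auto
  next
    case False
    then have "prov n (Imp (Bot c) (Imp (Bot ?e) (Neg ?e (Bot c))))"
      using c d by (intro prov.A4) auto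
    then have "der n G (Neg ?e (Bot c))" using assms(1) e by (meson der.mp der_mp_prov)
    then have "der n G (Bot (cocat ?e c))" using der_Neg_Bot_iff[of ?e c] False c d by auto
    moreover have "cocat ?e c = c \<union> d" by (auto simp: cocat_def)
    ultimately show ?thesis by simp
  qed
qed

lemma der_Bot_if_singletons:
  assumes "finite c" and "\<And>j. j \<in> c \<Longrightarrow> der n G (Bot {j})"
  shows "der n G (Bot c)"
  using assms
proof (induction c rule: finite_induct)
  case empty
  show ?case by (rule der_top)
next
  case (insert j c)
  then show ?case using der_Bot_Un[of G "{j}" c] by simp
qed

lemma der_sneg_Bot_iff:
  assumes "c \<subseteq> {1..n}"
  shows "der n G (sneg n (Bot c)) \<longleftrightarrow> der n G (Bot ({1..n} - c))"
proof (cases "c = {}")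
  case True
  have "der n G (sneg n (Bot {})) \<Longrightarrow> der n G (Bot {1..n})"
    by (rule der_exfalso[OF _ der_top]) simp_all
  moreover have "der n G (Bot {1..n}) \<Longrightarrow> der n G (sneg n (Bot {}))"
    by (rule der_exfalso[OF der_not_bot]) simp_all
  ultimately show ?thesis using True by auto
next
  case False
  then show ?thesis
    using der_Neg_Bot_iff[of "{1..n}" c] assms n_ge_1 by (simp add: sneg_def cocat_subset)
qed

lemma der_Neg_iff_if_der_Bot:
  assumes "der n G (Bot d)" and "d \<noteq> {}"
  shows "der n G (Neg d \<psi>) \<longleftrightarrow> der n G \<psi>"
proof
  have d: "d \<subseteq> {1..n}" using der_wff[OF assms(1)] by simp
  assume neg: "der n G (Neg d \<psi>)"
  then have w: "wff n (Neg d \<psi>)" using der_wff by blast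
  then have "prov n (Imp (Neg d \<psi>) (Imp (Bot d) (Neg d (Neg d \<psi>))))"
    using assms(2) d by (intro prov.A4)
  then have "der n G (Neg d (Neg d \<psi>))" using neg assms(1) by (meson der.mp der_mp_prov)
  then show "der n G \<psi>" using der_Neg_Neg_iff[of d d] assms(2) d w by (simp add: neg_def)
next
  assume pos: "der n G \<psi>"
  have d: "d \<subseteq> {1..n}" using der_wff[OF assms(1)] by simp
  have "prov n (Imp \<psi> (Imp (Bot d) (Neg d \<psi>)))"
    using der_wff[OF pos] assms(2) d by (intro prov.A4)
  then show "der n G (Neg d \<psi>)" using pos assms(1) by (meson der.mp der_mp_prov)
qed

lemma der_neg_iff_world:
  assumes world: "der n G (Bot ({1..n} - {j}))" and j: "j \<in> {1..n}"
    and c: "c \<subseteq> {1..n}" and "wff n \<psi>"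
  shows "der n G (neg c \<psi>) \<longleftrightarrow> der n G (signed n (j \<notin> c) \<psi>)"
proof (cases "j \<in> c")
  case False
  show ?thesis
  proof (cases "c = {}")
    case False
    have "der n G (Bot c)" using der_Bot_subset[OF world] c \<open>j \<notin> c\<close> by blast
    then show ?thesis using der_Neg_iff_if_der_Bot False \<open>j \<notin> c\<close> by (simp add: neg_def signed_def)
  qed (simp add: neg_def signed_def)
next
  case True
  show ?thesis
  proof (cases "c = {1..n}")
    case False
    let ?C = "{1..n} - c"
    have C: "?C \<noteq> {}" "?C \<subseteq> {1..n}" using False c by auto
    have "der n G (Bot ?C)" using der_Bot_subset[OF world] True by blast
    then have "der n G (sneg n \<psi>) \<longleftrightarrow> der n G (Neg ?C (Neg {1..n} \<psi>))"
      using der_Neg_iff_if_der_Bot C by (simp add: sneg_def)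
    also have "\<dots> \<longleftrightarrow> der n G (neg (cocat ?C {1..n}) \<psi>)"
      using der_Neg_Neg_iff C assms(4) n_ge_1 by simp
    also have "cocat ?C {1..n} = c" using c by (auto simp: cocat_def)
    finally show ?thesis using True by (simp add: signed_def)
  qed (use True in \<open>simp add: neg_def signed_def sneg_def\<close>)
qed

lemma der_signed_eval:
  assumes world: "der n G (Bot ({1..n} - {j}))" and j: "j \<in> {1..n}"
    and "\<And>p. p \<in> vars \<psi> \<Longrightarrow> der n G (signed n (v p j) (Var p))" and "wff n \<psi>"
  shows "der n G (signed n (eval v j \<psi>) \<psi>)"
  using assms(3,4)
proof (induction \<psi>)
  case (Var p)
  then show ?case by simp
next
  case (Bot c)
  then have c: "c \<subseteq> {1..n}" by simp
  show ?case
  proof (cases "j \<in> c")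
    case True
    have "der n G (Bot ({1..n} - c))" using der_Bot_subset[OF world] True by blast
    then show ?thesis using True der_sneg_Bot_iff[OF c] by (simp add: signed_def)
  next
    case False
    then show ?thesis using der_Bot_subset[OF world] c by (auto simp: signed_def)
  qed
next
  case (Imp a b)
  then have wff: "wff n a" "wff n b"
    and IH: "der n G (signed n (eval v j a) a)" "der n G (signed n (eval v j b) b)" by auto
  consider "\<not> eval v j a" | "eval v j b" | "eval v j a" "\<not> eval v j b" by blast
  then show ?case
  proof cases
    case 1
    then have "der n (insert a G) (sneg n a)" "der n (insert a G) a"
      using IH(1) wff by (auto simp: signed_def intro: der_mono der.hyp)
    then have "der n (insert a G) b" using der_exfalso wff by blast
    then show ?thesis using 1 der_deduction wff by (simp add: signed_def)
  next
    case 2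
    moreover have "prov n (Imp b (Imp a b))" using wff by (intro prov.A1)
    ultimately show ?thesis using IH(2) der_mp_prov by (simp add: signed_def)
  next
    case 3
    then show ?thesis using IH der_sneg_Imp_intro by (simp add: signed_def)
  qed
next
  case (Neg c \<psi>)
  then have c: "c \<noteq> {}" "c \<subseteq> {1..n}" and wff: "wff n \<psi>"
    and IH: "der n G (signed n (eval v j \<psi>) \<psi>)" by auto
  show ?case
  proof (cases "eval v j (Neg c \<psi>)")
    case True
    then have "(j \<notin> c) = eval v j \<psi>" by (auto split: if_splits)
    then have "der n G (neg c \<psi>) \<longleftrightarrow> der n G (signed n (eval v j \<psi>) \<psi>)"
      using der_neg_iff_world[OF world j c(2) wff] by simp
    then show ?thesis using True IH c by (simp add: neg_def signed_def)
  next
    case False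
    have "der n G (sneg n (Neg c \<psi>)) \<longleftrightarrow> der n G (neg ({1..n} - c) \<psi>)"
      using der_Neg_Neg_iff[of "{1..n}" c] c wff n_ge_1 by (simp add: sneg_def cocat_subset)
    also have "\<dots> \<longleftrightarrow> der n G (signed n (j \<in> c) \<psi>)"
      using der_neg_iff_world[OF world j Diff_subset wff] j by simp
    also have "(j \<in> c) = eval v j \<psi>" using False by (auto split: if_splits)
    finally show ?thesis using False IH by (simp add: signed_def)
  qed
qed

lemma der_elim_literals:
  assumes "finite S" and "\<And>\<rho>. der n (G \<union> literals n \<rho> S) \<phi>" and "wff n \<phi>"
  shows "der n G \<phi>"
  using assms
proof (induction S arbitrary: G rule: finite_induct)
  case empty
  then show ?case by (simp add: literals_def)
next
  case (insert p S)
  have "der n (insert (signed n b (Var p)) G) \<phi>" for b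
  proof (rule insert.IH)
    fix \<rho>
    have lits: "literals n (\<rho>(p := b)) (insert p S) = insert (signed n b (Var p)) (literals n \<rho> S)"
      using insert.hyps(2) unfolding literals_def by (auto intro!: image_cong)
    show "der n (insert (signed n b (Var p)) G \<union> literals n \<rho> S) \<phi>"
      using insert.prems(1)[of "\<rho>(p := b)"] unfolding lits by simp
  qed (rule insert.prems(2))
  from this[of True] this[of False]
  have "der n (insert (Var p) G) \<phi>" and "der n (insert (sneg n (Var p)) G) \<phi>"
    by (simp_all add: signed_def)
  then show ?case by (rule der_cases) simp
qed

lemma der_world_if_valid:
  assumes "j \<in> {1..n}" and "wff n \<phi>" and "\<And>v. eval v j \<phi>"
  shows "der n {Bot ({1..n} - {j})} \<phi>"
proof (rule der_elim_literals[OF finite_vars _ assms(2)])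
  fix \<rho>
  let ?G = "{Bot ({1..n} - {j})} \<union> literals n \<rho> (vars \<phi>)"
  have "der n ?G (signed n (eval (\<lambda>p _. \<rho> p) j \<phi>) \<phi>)"
    by (rule der_signed_eval) (use assms(1,2) in \<open>auto simp: literals_def intro: der.hyp\<close>)
  then show "der n ?G \<phi>" using assms(3) by (simp add: signed_def)
qed

lemma der_if_der_from_every_world:
  assumes "\<And>j. j \<in> {1..n} \<Longrightarrow> der n G (Imp (Bot ({1..n} - {j})) \<phi>)" and "wff n \<phi>"
  shows "der n G \<phi>"
proof (rule der_by_contradiction)
  let ?H = "insert (sneg n \<phi>) G"
  have "der n ?H (Bot {j})" if j: "j \<in> {1..n}" for j
  proof -
    have "der n ?H (Imp (Bot ({1..n} - {j})) \<phi>)" using der_mono[OF assms(1)[OF j]] by blast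
    moreover have "der n ?H (sneg n \<phi>)" using assms(2) by (simp add: der_assumption)
    ultimately have "der n ?H (sneg n (Bot ({1..n} - {j})))" by (rule der_modus_tollens)
    then have "der n ?H (Bot ({1..n} - ({1..n} - {j})))" using der_sneg_Bot_iff[of "{1..n} - {j}"] by simp
    moreover have "{1..n} - ({1..n} - {j}) = {j}" using j by auto
    ultimately show ?thesis by simp
  qed
  then show "der n ?H (Bot {1..n})" by (rule der_Bot_if_singletons[OF finite_atLeastAtMost])
  show "der n ?H (sneg n (Bot {1..n}))" by (rule der_not_bot)
qed (rule assms(2))

end

theorem mainTheorem15:
  fixes n :: nat and \<phi> :: fm
  assumes "n \<ge> 1" and "wff n \<phi>" and "taut n \<phi>"
  shows "prov n \<phi>"
proof -
  have "der n {} (Imp (Bot ({1..n} - {j})) \<phi>)" if "j \<in> {1..n}" for j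
  proof (rule der_deduction[OF assms(1)])
    show "der n {Bot ({1..n} - {j})} \<phi>"
      using der_world_if_valid[OF assms(1) that assms(2)] assms(3) that by (simp add: taut_def)
  qed simp
  then show ?thesis
    using der_if_der_from_every_world[OF assms(1)] assms(2) prov_if_der_empty by blast
qed

end
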